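(* Let $M\ge 2$ and $N$ be positive integers, and let $C_0,\dots,C_{N-1}$ be i.i.d. random variables, each uniformly distributed on $\{0,1,\dots,M-1\}$. Define the random matrix $\bm\Psi=[\bm\Psi_0,\bm\Psi_1,\dots,\bm\Psi_{N-1}]\in\mathbb{C}^{N\times MN}$, where $\bm\Psi_q=[\bm\psi_{0,q},\dots,\bm\psi_{M-1,q}]\in\mathbb{C}^{N\times M}$ and the $n$-th entry ($n=0,\dots,N-1$) of the column $\bm\psi_{p,q}$ is $[\bm\psi_{p,q}]_n=\frac{1}{\sqrt N}e^{j\frac{2\pi p}{M}C_n+j\frac{2\pi q}{N}n}$. Define the intra-block coherence $\mu_I=\max_{q}\|\bm\Psi_q^H\bm\Psi_q-\bm I_M\|_s$ and the inter-block coherence $\mu_B=\max_{q_1\neq q_2}\|\bm\Psi_{q_1}^H\bm\Psi_{q_2}\|_s$ (maxima over $q,q_1,q_2\in\{0,\dots,N-1\}$), where $\|\cdot\|_s$ is the spectral norm. Then for any constant $\epsilon>0$ and sufficiently large $N$, the inequality $$17\sqrt{\frac{K\log(MN)(1+\mu_I)}{N}}\,\|\bm\Psi\|_s+48\mu_B\log(MN)+\frac{2K}{N}\|\bm\Psi\|_s^2+3\mu_I\le\frac14$$ holds with probability at least $1-\epsilon$ (with respect to the random choice of $C_0,\dots,C_{N-1}$) whenever the positive integer $K$ satisfies $$K\le\frac{N\left(\frac18-\delta_1-\delta_2\right)^2}{81\,M\log(MN)\,(1+2\delta_2/3)},$$ where $\delta_1:=24\sqrt{\frac{M-1}{N}}\log(MN)\left(2\sqrt{\log(MN)-\log\epsilon}+1\right)$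 and $\delta_2:=\frac32\sqrt{\frac{M-1}{N}}\left(2\sqrt{\log(2M)-\log\epsilon}+1\right)$.
   Context: $j$ denotes the imaginary unit, $\log$ is the natural logarithm, $(\cdot)^H$ is conjugate transpose, $\bm I_M$ is the $M\times M$ identity, and $\|\bm A\|_s$ is the largest singular value of $\bm A$. The model is that of a randomized stepped frequency radar with $N$ pulses and $M$ carrier frequencies, under the simplification that Doppler-shift differences across carrier frequencies are neglected (so the entries of $\bm\psi_{p,q}$ are exactly as given). *)

theory Defs
  imports Complex_Main "HOL-Library.FuncSet"
begin

definition spec_norm :: "nat \<Rightarrow> nat \<Rightarrow> (nat \<Rightarrow> nat \<Rightarrow> complex) \<Rightarrow> real" where
  "spec_norm m n A = Sup {sqrt (\<Sum>i<m. (cmod (\<Sum>k<n. A i k * v k))\<^sup>2) | v.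
       (\<Sum>k<n. (cmod (v k))\<^sup>2) = 1}"

definition psi :: "nat \<Rightarrow> nat \<Rightarrow> (nat \<Rightarrow> nat) \<Rightarrow> nat \<Rightarrow> nat \<Rightarrow> nat \<Rightarrow> complex" where
  "psi M N C p q n = exp (\<i> * complex_of_real (2 * pi * real p / real M * real (C n))
                        + \<i> * complex_of_real (2 * pi * real q / real N * real n))
                    / complex_of_real (sqrt (real N))"

definition Psi :: "nat \<Rightarrow> nat \<Rightarrow> (nat \<Rightarrow> nat) \<Rightarrow> nat \<Rightarrow> nat \<Rightarrow> complex" where
  "Psi M N C n col = psi M N C (col mod M) (col div M) n"

definition gram :: "nat \<Rightarrow> nat \<Rightarrow> (nat \<Rightarrow> nat) \<Rightarrow> nat \<Rightarrow> nat \<Rightarrow> nat \<Rightarrow> nat \<Rightarrow> complex" where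
  "gram M N C q1 q2 a b = (\<Sum>n<N. cnj (psi M N C a q1 n) * psi M N C b q2 n)"

definition mu_I :: "nat \<Rightarrow> nat \<Rightarrow> (nat \<Rightarrow> nat) \<Rightarrow> real" where
  "mu_I M N C = Max ((\<lambda>q. spec_norm M M (\<lambda>a b. gram M N C q q a b - (if a = b then 1 else 0))) ` {..<N})"

definition mu_B :: "nat \<Rightarrow> nat \<Rightarrow> (nat \<Rightarrow> nat) \<Rightarrow> real" where
  "mu_B M N C = Max {spec_norm M M (gram M N C q1 q2) | q1 q2. q1 < N \<and> q2 < N \<and> q1 \<noteq> q2}"

text \<open>Probability of event P when C_0..C_{N-1} are i.i.d. uniform on {0..M-1}
  (i.e. C uniform on the finite product space).\<close>
definition unif_prob :: "nat \<Rightarrow> nat \<Rightarrow> ((nat \<Rightarrow> nat) \<Rightarrow> bool) \<Rightarrow> real" where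
  "unif_prob M N P = real (card {C \<in> PiE {..<N} (\<lambda>_. {..<M}). P C}) / real M ^ N"

end

(*
  The Gram entries of Psi are normalised character sums: with root_unity m k = e^(2 pi i k/m),
    [Psi_q1^H Psi_q2]_(a,b) = (1/N) sum_n root_unity M ((b - a) C_n) * root_unity N ((q2 - q1) n).
  For a = b they are deterministic (1 on diagonal blocks, 0 off them, by orthogonality of
  characters). For a <> b each summand has mean zero over the uniform C_n, so Hoeffding's
  inequality on real and imaginary parts and a union bound over the at most M^2 N^2 entries
  give, with probability at least 1 - 4 M^2 N^2 exp(-N^(1/3)/2), that all these entries are at
  most 2 N^(-1/3). A spectral norm is at most the dimension M times the largest entry, so
  mu_I, mu_B <= 2 M N^(-1/3), whereas ||Psi||_s <= sqrt M always (Parseval in q, Cauchy-Schwarz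
  in p). Once delta_1 and delta_2 are small the bound on K forces K M log(MN) / N <= 1/5100,
  and then the four terms add up to less than 1/4 for all large N. These bounds are far
  cruder than the matrix concentration used in the paper, but suffice asymptotically.
*)
theory Submission
  imports Defs "HOL-Probability.Hoeffding" "HOL-Real_Asymp.Real_Asymp"
begin

section \<open>Roots of unity and the discrete Fourier transform\<close>

definition root_unity :: "nat \<Rightarrow> int \<Rightarrow> complex" where
  "root_unity m k = cis (2 * pi * of_int k / real m)"

lemma norm_root_unity [simp]: "norm (root_unity m k) = 1"
  by (simp add: root_unity_def)

lemma root_unity_0 [simp]: "root_unity m 0 = 1"
  by (simp add: root_unity_def)

lemma root_unity_add: "root_unity m (k + l) = root_unity m k * root_unity m l"
  by (simp add: root_unity_def cis_mult add_divide_distrib distrib_left)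

lemma cnj_root_unity: "cnj (root_unity m k) = root_unity m (- k)"
  by (simp add: root_unity_def cis_cnj)

lemma root_unity_diff: "root_unity m (k - l) = root_unity m k * cnj (root_unity m l)"
  using root_unity_add[of m k "- l"] by (simp add: cnj_root_unity)

lemma root_unity_mult_of_nat: "root_unity m (k * int c) = root_unity m k ^ c"
  by (simp add: root_unity_def Complex.DeMoivre field_simps)

lemma root_unity_eq_1_iff:
  assumes "m > 0" shows "root_unity m k = 1 \<longleftrightarrow> int m dvd k"
proof -
  have "2 * pi * of_int k / real m = of_int (2 * n) * pi \<longleftrightarrow> k = n * int m" for n :: int
  proof -
    have "2 * pi * of_int k / real m = of_int (2 * n) * pi
            \<longleftrightarrow> 2 * pi * of_int k = 2 * pi * (of_int n * real m)"
      using assms by (simp add: divide_eq_eq mult_ac)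
    also have "\<dots> \<longleftrightarrow> real_of_int k = real_of_int (n * int m)"
      by simp
    finally show ?thesis by (simp only: of_int_eq_iff)
  qed
  then show ?thesis
    by (auto simp: root_unity_def cis_conv_exp exp_eq_1 dvd_def mult.commute)
qed

lemma sum_root_unity_eq_0:
  assumes "\<not> int m dvd k"
  shows "(\<Sum>c<m. root_unity m (k * int c)) = 0"
proof (cases "m = 0")
  case False
  have "root_unity m k \<noteq> 1"
    using assms False by (simp add: root_unity_eq_1_iff)
  moreover have "root_unity m k ^ m = 1"
    using False by (simp add: root_unity_mult_of_nat[symmetric] root_unity_eq_1_iff)
  ultimately show ?thesis
    by (simp add: root_unity_mult_of_nat geometric_sum)
qed simp

lemma int_dvd_diff_iff:
  assumes "a < m" "b < m"
  shows "int m dvd int a - int b \<longleftrightarrow> a = b"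
proof
  assume dvd: "int m dvd int a - int b"
  show "a = b"
  proof (rule ccontr)
    assume "a \<noteq> b"
    then have "\<bar>int m\<bar> \<le> \<bar>int a - int b\<bar>"
      using dvd_imp_le_int[OF _ dvd] by simp
    with assms show False by simp
  qed
qed simp

lemma sum_root_unity_orthogonal:
  assumes "q < N" "q' < N"
  shows "(\<Sum>n<N. root_unity N (int q * int n) * cnj (root_unity N (int q' * int n)))
           = (if q = q' then of_nat N else 0)"
proof -
  have "root_unity N (int q * int n) * cnj (root_unity N (int q' * int n))
          = root_unity N ((int q - int q') * int n)" for n
    by (simp add: cnj_root_unity root_unity_add[symmetric] algebra_simps)
  then show ?thesis
    using sum_root_unity_eq_0[of N "int q - int q'"] int_dvd_diff_iff[OF assms] by simp
qed

lemma parseval_root_unity: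
  "(\<Sum>n<N. (cmod (\<Sum>q<N. root_unity N (int q * int n) * x q))\<^sup>2) = real N * (\<Sum>q<N. (cmod (x q))\<^sup>2)"
proof -
  define E where "E q n = root_unity N (int q * int n)" for q n :: nat
  have "complex_of_real (\<Sum>n<N. (cmod (\<Sum>q<N. E q n * x q))\<^sup>2)
        = (\<Sum>n<N. (\<Sum>q<N. E q n * x q) * cnj (\<Sum>q<N. E q n * x q))"
    unfolding of_real_sum complex_norm_square ..
  also have "\<dots> = (\<Sum>n<N. \<Sum>q<N. \<Sum>q'<N. x q * cnj (x q') * (E q n * cnj (E q' n)))"
    by (simp add: sum_product mult_ac)
  also have "\<dots> = (\<Sum>q<N. \<Sum>q'<N. \<Sum>n<N. x q * cnj (x q') * (E q n * cnj (E q' n)))"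
    by (subst sum.swap) (rule sum.cong[OF refl sum.swap])
  also have "\<dots> = (\<Sum>q<N. \<Sum>q'<N. x q * cnj (x q') * (\<Sum>n<N. E q n * cnj (E q' n)))"
    by (simp add: sum_distrib_left)
  also have "\<dots> = (\<Sum>q<N. of_nat N * (x q * cnj (x q)))"
    by (simp add: E_def sum_root_unity_orthogonal if_distrib mult_ac cong: if_cong)
  also have "\<dots> = complex_of_real (real N * (\<Sum>q<N. (cmod (x q))\<^sup>2))"
    by (simp only: of_real_mult of_real_sum complex_norm_square sum_distrib_left of_real_of_nat_eq)
  finally show ?thesis unfolding E_def of_real_eq_iff .
qed

section \<open>Spectral norm bounds\<close>

lemma cmod_sum_mult_squared_le:
  fixes a b :: "'i \<Rightarrow> complex"
  shows "(cmod (\<Sum>k\<in>I. a k * b k))\<^sup>2 \<le> (\<Sum>k\<in>I. (cmod (a k))\<^sup>2) * (\<Sum>k\<in>I. (cmod (b k))\<^sup>2)"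
proof -
  have "cmod (\<Sum>k\<in>I. a k * b k) \<le> (\<Sum>k\<in>I. cmod (a k) * cmod (b k))"
    by (rule order_trans[OF norm_sum]) (simp add: norm_mult)
  then have "(cmod (\<Sum>k\<in>I. a k * b k))\<^sup>2 \<le> (\<Sum>k\<in>I. cmod (a k) * cmod (b k))\<^sup>2"
    by (rule power_mono) simp
  also have "\<dots> \<le> (\<Sum>k\<in>I. (cmod (a k))\<^sup>2) * (\<Sum>k\<in>I. (cmod (b k))\<^sup>2)"
    by (rule Cauchy_Schwarz_ineq_sum)
  finally show ?thesis .
qed

lemma sum_lessThan_mult_split:
  fixes g :: "nat \<Rightarrow> 'a::comm_monoid_add"
  shows "(\<Sum>col<M * N. g col) = (\<Sum>q<N. \<Sum>p<M. g (q * M + p))"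
proof -
  have "(\<Sum>col<N * M. g col) = (\<Sum>q<N. sum g {q * M..<q * M + M})"
    by (rule sum.nat_group[symmetric])
  also have "\<dots> = (\<Sum>q<N. \<Sum>p<M. g (q * M + p))"
    by (simp add: sum.shift_bounds_nat_ivl[of g 0 "q * M" M for q, simplified] lessThan_atLeast0 add.commute)
  finally show ?thesis by (simp add: mult.commute)
qed

lemma sum_cmod_mult_vec_squared_le:
  assumes "(\<Sum>k<n. (cmod (v k))\<^sup>2) = 1"
  shows "(\<Sum>i<m. (cmod (\<Sum>k<n. A i k * v k))\<^sup>2) \<le> (\<Sum>i<m. \<Sum>k<n. (cmod (A i k))\<^sup>2)"
proof (rule sum_mono)
  fix i
  show "(cmod (\<Sum>k<n. A i k * v k))\<^sup>2 \<le> (\<Sum>k<n. (cmod (A i k))\<^sup>2)"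
    using cmod_sum_mult_squared_le[of "A i" v "{..<n}"] assms by simp
qed

lemma ex_unit_vector:
  fixes n :: nat assumes "0 < n" shows "\<exists>v. (\<Sum>k<n. (cmod (v k))\<^sup>2) = 1"
proof
  have "(\<Sum>k<n. (cmod (if k = 0 then 1 else 0))\<^sup>2) = (\<Sum>k<n. if k = 0 then 1 else 0 :: real)"
    by (rule sum.cong) auto
  also have "\<dots> = 1" using assms by simp
  finally show "(\<Sum>k<n. (cmod (if k = 0 then 1 else 0))\<^sup>2) = 1" .
qed

lemma spec_norm_nonneg:
  assumes "0 < n" shows "0 \<le> spec_norm m n A"
proof -
  define S where "S = {sqrt (\<Sum>i<m. (cmod (\<Sum>k<n. A i k * v k))\<^sup>2) | v. (\<Sum>k<n. (cmod (v k))\<^sup>2) = 1}"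
  obtain v where v: "(\<Sum>k<n. (cmod (v k))\<^sup>2) = 1" using ex_unit_vector[OF assms] ..
  then have "sqrt (\<Sum>i<m. (cmod (\<Sum>k<n. A i k * v k))\<^sup>2) \<in> S" by (auto simp: S_def)
  moreover have "bdd_above S"
    using sum_cmod_mult_vec_squared_le[where A = A and m = m and n = n]
    by (auto simp: S_def bdd_above_def intro!: exI[of _ "sqrt (\<Sum>i<m. \<Sum>k<n. (cmod (A i k))\<^sup>2)"])
  ultimately have "sqrt (\<Sum>i<m. (cmod (\<Sum>k<n. A i k * v k))\<^sup>2) \<le> Sup S"
    by (rule cSup_upper)
  moreover have "0 \<le> sqrt (\<Sum>i<m. (cmod (\<Sum>k<n. A i k * v k))\<^sup>2)"
    by (simp add: sum_nonneg)
  moreover have "spec_norm m n A = Sup S" by (simp add: spec_norm_def S_def)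
  ultimately show ?thesis by linarith
qed

lemma spec_norm_le:
  assumes "0 < n" "0 \<le> B"
    and "\<And>v. (\<Sum>k<n. (cmod (v k))\<^sup>2) = 1 \<Longrightarrow>
               (\<Sum>i<m. (cmod (\<Sum>k<n. A i k * v k))\<^sup>2) \<le> B\<^sup>2"
  shows "spec_norm m n A \<le> B"
  unfolding spec_norm_def
proof (rule cSup_least)
  obtain v where "(\<Sum>k<n. (cmod (v k))\<^sup>2) = 1" using ex_unit_vector[OF assms(1)] ..
  then show "{sqrt (\<Sum>i<m. (cmod (\<Sum>k<n. A i k * v k))\<^sup>2) | v. (\<Sum>k<n. (cmod (v k))\<^sup>2) = 1} \<noteq> {}"
    by blast
next
  fix x assume "x \<in> {sqrt (\<Sum>i<m. (cmod (\<Sum>k<n. A i k * v k))\<^sup>2) | v. (\<Sum>k<n. (cmod (v k))\<^sup>2) = 1}"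
  then obtain v where v: "(\<Sum>k<n. (cmod (v k))\<^sup>2) = 1"
    and x: "x = sqrt (\<Sum>i<m. (cmod (\<Sum>k<n. A i k * v k))\<^sup>2)"
    by blast
  have "x \<le> sqrt (B\<^sup>2)" unfolding x using assms(3)[OF v] by (rule real_sqrt_le_mono)
  then show "x \<le> B" using assms(2) by simp
qed

lemma spec_norm_le_entrywise:
  assumes "0 < n" "0 \<le> b" and "\<And>i k. i < m \<Longrightarrow> k < n \<Longrightarrow> cmod (A i k) \<le> b"
  shows "spec_norm m n A \<le> sqrt (real m * real n) * b"
proof (rule spec_norm_le)
  fix v :: "nat \<Rightarrow> complex" assume v: "(\<Sum>k<n. (cmod (v k))\<^sup>2) = 1"
  have "(\<Sum>i<m. (cmod (\<Sum>k<n. A i k * v k))\<^sup>2) \<le> (\<Sum>i<m. \<Sum>k<n. (cmod (A i k))\<^sup>2)"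
    using v by (rule sum_cmod_mult_vec_squared_le)
  also have "\<dots> \<le> (\<Sum>i<m. \<Sum>k<n. b\<^sup>2)"
    using assms(3) by (intro sum_mono power_mono) auto
  also have "\<dots> = (sqrt (real m * real n) * b)\<^sup>2"
    by (simp add: power_mult_distrib)
  finally show "(\<Sum>i<m. (cmod (\<Sum>k<n. A i k * v k))\<^sup>2) \<le> (sqrt (real m * real n) * b)\<^sup>2" .
qed (use assms in auto)

section \<open>The matrix \<open>\<Psi>\<close> and its Gram blocks\<close>

lemma psi_eq_root_unity:
  "psi M N C p q n
     = root_unity M (int p * int (C n)) * root_unity N (int q * int n) / complex_of_real (sqrt (real N))"
  by (simp add: psi_def root_unity_def cis_conv_exp exp_add mult_ac)

lemma sum_cmod_Psi_mult_vec_squared_le: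
  "(\<Sum>n<N. (cmod (\<Sum>col<M * N. Psi M N C n col * v col))\<^sup>2)
     \<le> real M * (\<Sum>col<M * N. (cmod (v col))\<^sup>2)"
proof -
  define w where
    "w n p = (\<Sum>q<N. root_unity N (int q * int n) * v (q * M + p)) / complex_of_real (sqrt (real N))" for n p
  have row: "(\<Sum>col<M * N. Psi M N C n col * v col) = (\<Sum>p<M. root_unity M (int p * int (C n)) * w n p)"
    for n
  proof -
    have "(\<Sum>col<M * N. Psi M N C n col * v col) = (\<Sum>q<N. \<Sum>p<M. psi M N C p q n * v (q * M + p))"
      by (simp add: sum_lessThan_mult_split Psi_def)
    also have "\<dots> = (\<Sum>p<M. root_unity M (int p * int (C n)) * w n p)"
      by (simp add: sum.swap[of _ "{..<N}"] psi_eq_root_unity w_def sum_distrib_left sum_divide_distrib mult_ac)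
    finally show ?thesis .
  qed
  have parseval: "(\<Sum>n<N. (cmod (w n p))\<^sup>2) = (\<Sum>q<N. (cmod (v (q * M + p)))\<^sup>2)" for p
  proof (cases "N = 0")
    case False
    have "(\<Sum>n<N. (cmod (w n p))\<^sup>2)
          = (\<Sum>n<N. (cmod (\<Sum>q<N. root_unity N (int q * int n) * v (q * M + p)))\<^sup>2 / real N)"
      by (simp add: w_def norm_divide power_divide)
    also have "\<dots> = (\<Sum>n<N. (cmod (\<Sum>q<N. root_unity N (int q * int n) * v (q * M + p)))\<^sup>2) / real N"
      by (rule sum_divide_distrib[symmetric])
    also have "\<dots> = (\<Sum>q<N. (cmod (v (q * M + p)))\<^sup>2)"
      using False by (simp add: parseval_root_unity)
    finally show ?thesis .
  qed simp
  have "(\<Sum>n<N. (cmod (\<Sum>col<M * N. Psi M N C n col * v col))\<^sup>2)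
        \<le> (\<Sum>n<N. real M * (\<Sum>p<M. (cmod (w n p))\<^sup>2))"
  proof (rule sum_mono)
    fix n
    show "(cmod (\<Sum>col<M * N. Psi M N C n col * v col))\<^sup>2 \<le> real M * (\<Sum>p<M. (cmod (w n p))\<^sup>2)"
      using cmod_sum_mult_squared_le[of "\<lambda>p. root_unity M (int p * int (C n))" "w n" "{..<M}"]
      by (simp add: row)
  qed
  also have "\<dots> = real M * (\<Sum>p<M. \<Sum>n<N. (cmod (w n p))\<^sup>2)"
    by (simp add: sum_distrib_left[symmetric] sum.swap[of _ "{..<N}" "{..<M}"])
  also have "\<dots> = real M * (\<Sum>col<M * N. (cmod (v col))\<^sup>2)"
    by (simp add: parseval sum_lessThan_mult_split sum.swap[of _ "{..<M}"])
  finally show ?thesis .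
qed

lemma spec_norm_Psi_le:
  assumes "0 < M" "0 < N"
  shows "spec_norm N (M * N) (Psi M N C) \<le> sqrt (real M)"
proof (rule spec_norm_le)
  fix v :: "nat \<Rightarrow> complex" assume "(\<Sum>k<M * N. (cmod (v k))\<^sup>2) = 1"
  then show "(\<Sum>i<N. (cmod (\<Sum>k<M * N. Psi M N C i k * v k))\<^sup>2) \<le> (sqrt (real M))\<^sup>2"
    using sum_cmod_Psi_mult_vec_squared_le[of M N C v] by simp
qed (use assms in auto)

lemma gram_eq_root_unity:
  "gram M N C q1 q2 a b
     = (\<Sum>n<N. root_unity M ((int b - int a) * int (C n)) * root_unity N ((int q2 - int q1) * int n))
       / of_nat N"
proof -
  have sqrt_sq: "complex_of_real (sqrt (real N)) * complex_of_real (sqrt (real N)) = of_nat N"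
    by (simp flip: of_real_mult)
  have "cnj (psi M N C a q1 n) * psi M N C b q2 n
        = root_unity M ((int b - int a) * int (C n)) * root_unity N ((int q2 - int q1) * int n) / of_nat N"
    for n
    by (simp add: psi_eq_root_unity left_diff_distrib right_diff_distrib root_unity_diff sqrt_sq[symmetric] mult_ac)
  then show ?thesis
    by (simp add: gram_def sum_divide_distrib)
qed

lemma gram_diag_eq_1:
  assumes "0 < N" shows "gram M N C q q a a = 1"
  using assms by (simp add: gram_eq_root_unity)

lemma gram_cross_diag_eq_0:
  assumes "q1 < N" "q2 < N" "q1 \<noteq> q2"
  shows "gram M N C q1 q2 a a = 0"
  using assms by (simp add: gram_eq_root_unity sum_root_unity_eq_0 int_dvd_diff_iff)

lemma mu_I_le_of_offdiag_le:
  assumes "0 < M" "0 < N" "0 \<le> b"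
    and "\<And>q a c. q < N \<Longrightarrow> a < M \<Longrightarrow> c < M \<Longrightarrow> a \<noteq> c \<Longrightarrow> cmod (gram M N C q q a c) \<le> b"
  shows "mu_I M N C \<le> real M * b"
  unfolding mu_I_def
proof (rule Max.boundedI)
  fix x assume "x \<in> (\<lambda>q. spec_norm M M (\<lambda>a c. gram M N C q q a c - (if a = c then 1 else 0))) ` {..<N}"
  then obtain q where q: "q < N" and x: "x = spec_norm M M (\<lambda>a c. gram M N C q q a c - (if a = c then 1 else 0))"
    by blast
  have "x \<le> sqrt (real M * real M) * b"
    unfolding x using assms q by (intro spec_norm_le_entrywise) (auto simp: gram_diag_eq_1)
  then show "x \<le> real M * b" by simp
qed (use assms in auto)

lemma mu_B_le_of_offdiag_le:
  assumes "0 < M" "2 \<le> N" "0 \<le> b"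
    and "\<And>q1 q2 a c. q1 < N \<Longrightarrow> q2 < N \<Longrightarrow> q1 \<noteq> q2 \<Longrightarrow> a < M \<Longrightarrow> c < M \<Longrightarrow> a \<noteq> c \<Longrightarrow>
           cmod (gram M N C q1 q2 a c) \<le> b"
  shows "mu_B M N C \<le> real M * b"
  unfolding mu_B_def
proof (rule Max.boundedI)
  have "{spec_norm M M (gram M N C q1 q2) | q1 q2. q1 < N \<and> q2 < N \<and> q1 \<noteq> q2}
          \<subseteq> (\<lambda>(q1, q2). spec_norm M M (gram M N C q1 q2)) ` ({..<N} \<times> {..<N})"
    by auto
  then show "finite {spec_norm M M (gram M N C q1 q2) | q1 q2. q1 < N \<and> q2 < N \<and> q1 \<noteq> q2}"
    by (rule finite_subset) simp
  show "{spec_norm M M (gram M N C q1 q2) | q1 q2. q1 < N \<and> q2 < N \<and> q1 \<noteq> q2} \<noteq> {}"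
  proof -
    have "spec_norm M M (gram M N C 0 1)
            \<in> {spec_norm M M (gram M N C q1 q2) | q1 q2. q1 < N \<and> q2 < N \<and> q1 \<noteq> q2}"
      using assms(2) by fastforce
    then show ?thesis by blast
  qed
next
  fix x assume "x \<in> {spec_norm M M (gram M N C q1 q2) | q1 q2. q1 < N \<and> q2 < N \<and> q1 \<noteq> q2}"
  then obtain q1 q2 where q: "q1 < N" "q2 < N" "q1 \<noteq> q2" and x: "x = spec_norm M M (gram M N C q1 q2)"
    by blast
  have "cmod (gram M N C q1 q2 i k) \<le> b" if "i < M" "k < M" for i k
    using assms(3) assms(4)[OF q] gram_cross_diag_eq_0[OF q] that by (cases "i = k") auto
  then have "x \<le> sqrt (real M * real M) * b"
    unfolding x using assms by (intro spec_norm_le_entrywise) auto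
  then show "x \<le> real M * b" by simp
qed

section \<open>Hoeffding's inequality on a uniform product space\<close>

text \<open>Hoeffding's lemma for a fair \<open>\<plusminus>l\<close> coin: the library's auxiliary bound with \<open>p = 1/2\<close>.\<close>

lemma cosh_le_exp_half_square:
  fixes l :: real assumes "0 \<le> l"
  shows "(exp l + exp (- l)) / 2 \<le> exp (l\<^sup>2 / 2)"
proof -
  have "- (2 * l) * (1 / 2) + ln (1 + 1 / 2 * (exp (2 * l) - 1)) \<le> (2 * l)\<^sup>2 / 8"
    using Hoeffdings_lemma_aux[of "2 * l" "1 / 2"] assms by simp
  then have "ln ((1 + exp (2 * l)) / 2) \<le> l + l\<^sup>2 / 2"
    by (simp add: power2_eq_square field_simps)
  then have "exp (ln ((1 + exp (2 * l)) / 2)) \<le> exp (l + l\<^sup>2 / 2)"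
    by simp
  then have "(1 + exp (2 * l)) / 2 \<le> exp (l + l\<^sup>2 / 2)"
    by (simp add: add_pos_pos)
  then have "(1 + exp (2 * l)) / 2 * exp (- l) \<le> exp (l + l\<^sup>2 / 2) * exp (- l)"
    by (rule mult_right_mono) simp
  then show ?thesis
    by (simp add: field_simps flip: exp_add)
qed

lemma exp_mult_le_chord:
  fixes l x :: real assumes "0 \<le> l" "\<bar>x\<bar> \<le> 1"
  shows "exp (l * x) \<le> (1 + x) / 2 * exp l + (1 - x) / 2 * exp (- l)"
proof -
  define t where "t = (1 - x) / 2"
  have "0 \<le> t" "t \<le> 1" using assms(2) by (auto simp: t_def)
  from convex_onD[OF convex_on_exp[OF assms(1)] this, of 1 "- 1"]
  show ?thesis by (simp add: t_def field_simps)
qed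

lemma sum_exp_mult_le_exp_half_square:
  fixes f :: "nat \<Rightarrow> real"
  assumes "\<And>c. c < M \<Longrightarrow> \<bar>f c\<bar> \<le> 1" "(\<Sum>c<M. f c) = 0" "0 \<le> l"
  shows "(\<Sum>c<M. exp (l * f c)) \<le> real M * exp (l\<^sup>2 / 2)"
proof -
  have "(\<Sum>c<M. exp (l * f c)) \<le> (\<Sum>c<M. (1 + f c) / 2 * exp l + (1 - f c) / 2 * exp (- l))"
    using assms by (intro sum_mono exp_mult_le_chord) auto
  also have "\<dots> = (\<Sum>c<M. (exp l + exp (- l)) / 2 + f c * ((exp l - exp (- l)) / 2))"
    by (simp add: field_simps)
  also have "\<dots> = real M * ((exp l + exp (- l)) / 2) + (\<Sum>c<M. f c) * ((exp l - exp (- l)) / 2)"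
    by (simp only: sum.distrib sum_constant card_lessThan sum_distrib_right)
  also have "\<dots> = real M * ((exp l + exp (- l)) / 2)"
    using assms(2) by simp
  also have "\<dots> \<le> real M * exp (l\<^sup>2 / 2)"
    using assms(3) by (intro mult_left_mono cosh_le_exp_half_square) auto
  finally show ?thesis .
qed

lemma card_PiE_sum_ge_le:
  fixes f :: "nat \<Rightarrow> nat \<Rightarrow> real"
  assumes "0 < N" "0 \<le> s"
    and "\<And>n c. n < N \<Longrightarrow> c < M \<Longrightarrow> \<bar>f n c\<bar> \<le> 1"
    and "\<And>n. n < N \<Longrightarrow> (\<Sum>c<M. f n c) = 0"
  shows "real (card {C \<in> PiE {..<N} (\<lambda>_. {..<M}). s \<le> (\<Sum>n<N. f n (C n))})
           \<le> real M ^ N * exp (- (s\<^sup>2) / (2 * real N))"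
proof -
  define l where "l = s / real N"
  have "0 \<le> l" using assms by (simp add: l_def)
  define A where "A = PiE {..<N} (\<lambda>_. {..<M})"
  define E where "E = {C \<in> A. s \<le> (\<Sum>n<N. f n (C n))}"
  have "finite A" by (simp add: A_def finite_PiE)
  have "real (card E) = (\<Sum>C\<in>E. 1)" by simp
  also have "\<dots> \<le> (\<Sum>C\<in>E. exp (l * (\<Sum>n<N. f n (C n)) - l * s))"
    using \<open>0 \<le> l\<close> by (intro sum_mono) (auto simp: E_def mult_left_mono)
  also have "\<dots> \<le> (\<Sum>C\<in>A. exp (l * (\<Sum>n<N. f n (C n)) - l * s))"
    using \<open>finite A\<close> by (intro sum_mono2) (auto simp: E_def)
  also have "\<dots> = exp (- l * s) * (\<Sum>C\<in>A. \<Prod>n<N. exp (l * f n (C n)))"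
  proof -
    have "exp (l * (\<Sum>n<N. f n (C n)) - l * s) = exp (- l * s) * exp (\<Sum>n<N. l * f n (C n))" for C
      by (simp add: sum_distrib_left flip: exp_add)
    then show ?thesis
      by (simp add: exp_sum sum_distrib_left)
  qed
  also have "(\<Sum>C\<in>A. \<Prod>n<N. exp (l * f n (C n))) = (\<Prod>n<N. \<Sum>c<M. exp (l * f n c))"
    unfolding A_def by (rule prod_sum_PiE[symmetric]) auto
  also have "\<dots> \<le> (\<Prod>n<N. real M * exp (l\<^sup>2 / 2))"
    using assms(3,4) \<open>0 \<le> l\<close>
    by (intro prod_mono conjI sum_nonneg sum_exp_mult_le_exp_half_square) auto
  also have "exp (- l * s) * (\<Prod>n<N. real M * exp (l\<^sup>2 / 2))
               = real M ^ N * exp (- l * s + real N * (l\<^sup>2 / 2))"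
    by (simp add: power_mult_distrib exp_of_nat_mult[symmetric] mult_ac flip: exp_add)
  also have "- l * s + real N * (l\<^sup>2 / 2) = - (s\<^sup>2) / (2 * real N)"
    using assms(1) by (simp add: l_def power2_eq_square field_simps)
  finally show ?thesis by (simp add: E_def A_def mult_left_mono)
qed

lemma card_PiE_abs_sum_ge_le:
  fixes f :: "nat \<Rightarrow> nat \<Rightarrow> real"
  assumes "0 < N" "0 \<le> s"
    and "\<And>n c. n < N \<Longrightarrow> c < M \<Longrightarrow> \<bar>f n c\<bar> \<le> 1"
    and "\<And>n. n < N \<Longrightarrow> (\<Sum>c<M. f n c) = 0"
  shows "real (card {C \<in> PiE {..<N} (\<lambda>_. {..<M}). s \<le> \<bar>\<Sum>n<N. f n (C n)\<bar>})
           \<le> 2 * real M ^ N * exp (- (s\<^sup>2) / (2 * real N))"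
proof -
  define E where "E h = {C \<in> PiE {..<N} (\<lambda>_. {..<M}). s \<le> (\<Sum>n<N. h n (C n))}"
    for h :: "nat \<Rightarrow> nat \<Rightarrow> real"
  have le_abs_iff: "s \<le> \<bar>x\<bar> \<longleftrightarrow> s \<le> x \<or> s \<le> - x" for x :: real
    by (cases "0 \<le> x") auto
  have "{C \<in> PiE {..<N} (\<lambda>_. {..<M}). s \<le> \<bar>\<Sum>n<N. f n (C n)\<bar>} = E f \<union> E (\<lambda>n c. - f n c)"
    by (auto simp: E_def sum_negf le_abs_iff)
  then have "real (card {C \<in> PiE {..<N} (\<lambda>_. {..<M}). s \<le> \<bar>\<Sum>n<N. f n (C n)\<bar>})
               \<le> real (card (E f)) + real (card (E (\<lambda>n c. - f n c)))"
    by (metis card_Un_le of_nat_add of_nat_mono)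
  also have "\<dots> \<le> 2 * real M ^ N * exp (- (s\<^sup>2) / (2 * real N))"
    using card_PiE_sum_ge_le[OF assms(1,2), where f = f and M = M]
      card_PiE_sum_ge_le[OF assms(1,2), where f = "\<lambda>n c. - f n c" and M = M]
      assms(3,4)
    by (simp add: E_def sum_negf)
  finally show ?thesis .
qed

lemma card_PiE_cmod_sum_ge_le:
  fixes g :: "nat \<Rightarrow> nat \<Rightarrow> complex"
  assumes "0 < N" "0 \<le> s"
    and "\<And>n c. n < N \<Longrightarrow> c < M \<Longrightarrow> cmod (g n c) \<le> 1"
    and "\<And>n. n < N \<Longrightarrow> (\<Sum>c<M. g n c) = 0"
  shows "real (card {C \<in> PiE {..<N} (\<lambda>_. {..<M}). 2 * s \<le> cmod (\<Sum>n<N. g n (C n))})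
           \<le> 4 * real M ^ N * exp (- (s\<^sup>2) / (2 * real N))"
proof -
  define E where "E h = {C \<in> PiE {..<N} (\<lambda>_. {..<M}). s \<le> \<bar>\<Sum>n<N. h (g n (C n))\<bar>}"
    for h :: "complex \<Rightarrow> real"
  have sub: "{C \<in> PiE {..<N} (\<lambda>_. {..<M}). 2 * s \<le> cmod (\<Sum>n<N. g n (C n))} \<subseteq> E Re \<union> E Im"
  proof
    fix C assume C: "C \<in> {C \<in> PiE {..<N} (\<lambda>_. {..<M}). 2 * s \<le> cmod (\<Sum>n<N. g n (C n))}"
    then have "2 * s \<le> cmod (\<Sum>n<N. g n (C n))" by simp
    then have "s \<le> \<bar>Re (\<Sum>n<N. g n (C n))\<bar> \<or> s \<le> \<bar>Im (\<Sum>n<N. g n (C n))\<bar>"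
      using cmod_le[of "\<Sum>n<N. g n (C n)"] by linarith
    with C show "C \<in> E Re \<union> E Im"
      by (simp add: E_def)
  qed
  have "finite (E Re \<union> E Im)"
    by (simp add: E_def finite_PiE)
  from card_mono[OF this sub]
  have "card {C \<in> PiE {..<N} (\<lambda>_. {..<M}). 2 * s \<le> cmod (\<Sum>n<N. g n (C n))} \<le> card (E Re) + card (E Im)"
    using card_Un_le[of "E Re" "E Im"] by linarith
  then have "real (card {C \<in> PiE {..<N} (\<lambda>_. {..<M}). 2 * s \<le> cmod (\<Sum>n<N. g n (C n))})
               \<le> real (card (E Re)) + real (card (E Im))"
    by linarith
  also have "\<dots> \<le> 4 * real M ^ N * exp (- (s\<^sup>2) / (2 * real N))"
  proof -
    have "\<bar>Re (g n c)\<bar> \<le> 1" "\<bar>Im (g n c)\<bar> \<le> 1" if "n < N" "c < M" for n c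
      using assms(3)[OF that] abs_Re_le_cmod[of "g n c"] abs_Im_le_cmod[of "g n c"] by linarith+
    moreover have "(\<Sum>c<M. Re (g n c)) = 0" "(\<Sum>c<M. Im (g n c)) = 0" if "n < N" for n
      using assms(4)[OF that] by (simp_all flip: Re_sum Im_sum)
    ultimately show ?thesis
      using card_PiE_abs_sum_ge_le[OF assms(1,2), where f = "\<lambda>n c. Re (g n c)" and M = M]
        card_PiE_abs_sum_ge_le[OF assms(1,2), where f = "\<lambda>n c. Im (g n c)" and M = M]
      by (simp add: E_def)
  qed
  finally show ?thesis .
qed

lemma unif_prob_mono:
  assumes "\<And>C. C \<in> PiE {..<N} (\<lambda>_. {..<M}) \<Longrightarrow> P C \<Longrightarrow> Q C"
  shows "unif_prob M N P \<le> unif_prob M N Q"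
proof -
  have "card {C \<in> PiE {..<N} (\<lambda>_. {..<M}). P C} \<le> card {C \<in> PiE {..<N} (\<lambda>_. {..<M}). Q C}"
    using assms by (intro card_mono) (auto simp: finite_PiE)
  then show ?thesis
    by (simp add: unif_prob_def divide_right_mono)
qed

lemma unif_prob_ge_1_minus_card:
  assumes "0 < M" "finite B" "\<And>C. C \<in> PiE {..<N} (\<lambda>_. {..<M}) \<Longrightarrow> C \<notin> B \<Longrightarrow> P C"
  shows "1 - real (card B) / real M ^ N \<le> unif_prob M N P"
proof -
  define A where "A = PiE {..<N} (\<lambda>_. {..<M})"
  have "card A - card B \<le> card (A - B)"
    using assms(2) by (rule diff_card_le_card_Diff)
  also have "\<dots> \<le> card {C \<in> A. P C}"
    using assms(3) by (intro card_mono) (auto simp: A_def finite_PiE)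
  finally have "real (card A) - real (card B) \<le> real (card {C \<in> A. P C})"
    by linarith
  moreover have "card A = M ^ N" by (simp add: A_def card_PiE)
  ultimately have "real M ^ N - real (card B) \<le> real (card {C \<in> A. P C})"
    by simp
  moreover have "0 < real M ^ N" using assms(1) by simp
  ultimately have "(real M ^ N - real (card B)) / real M ^ N \<le> real (card {C \<in> A. P C}) / real M ^ N"
    by (simp add: divide_right_mono)
  with \<open>0 < real M ^ N\<close> show ?thesis
    using assms(1) by (simp add: unif_prob_def A_def diff_divide_distrib)
qed

section \<open>Concentration of the coherences\<close>

lemma card_gram_entry_ge_le:
  assumes "0 < N" "0 \<le> s" "a < M" "b < M" "a \<noteq> b"
  shows "real (card {C \<in> PiE {..<N} (\<lambda>_. {..<M}). 2 * s / real N \<le> cmod (gram M N C q1 q2 a b)})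
           \<le> 4 * real M ^ N * exp (- (s\<^sup>2) / (2 * real N))"
proof -
  define g where
    "g n c = root_unity M ((int b - int a) * int c) * root_unity N ((int q2 - int q1) * int n)" for n c
  have "(\<Sum>c<M. g n c) = 0" for n
    using sum_root_unity_eq_0[of M "int b - int a"] int_dvd_diff_iff[OF assms(4,3)] assms(5)
    by (simp add: g_def sum_distrib_right[symmetric])
  moreover have "cmod (g n c) \<le> 1" for n c
    by (simp add: g_def norm_mult)
  moreover have "2 * s / real N \<le> cmod (gram M N C q1 q2 a b) \<longleftrightarrow> 2 * s \<le> cmod (\<Sum>n<N. g n (C n))" for C
    using assms(1) by (simp add: gram_eq_root_unity g_def norm_divide divide_le_cancel)
  ultimately show ?thesis
    using card_PiE_cmod_sum_ge_le[OF assms(1,2), of M g] by simp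
qed

lemma card_gram_offdiag_ge_le:
  assumes "0 < N" "0 \<le> s"
  shows "real (card {C \<in> PiE {..<N} (\<lambda>_. {..<M}). \<exists>a<M. \<exists>b<M. \<exists>q1<N. \<exists>q2<N.
                       a \<noteq> b \<and> 2 * s / real N \<le> cmod (gram M N C q1 q2 a b)})
           \<le> real M ^ N * (4 * real M ^ 2 * real N ^ 2 * exp (- (s\<^sup>2) / (2 * real N)))"
proof -
  define T where "T = {..<M} \<times> {..<M} \<times> {..<N} \<times> {..<N}"
  define Bad where
    "Bad = (\<lambda>(a, b, q1, q2). {C \<in> PiE {..<N} (\<lambda>_. {..<M}).
                                a \<noteq> b \<and> 2 * s / real N \<le> cmod (gram M N C q1 q2 a b)})"
  define R where "R = 4 * real M ^ N * exp (- (s\<^sup>2) / (2 * real N))"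
  have "{C \<in> PiE {..<N} (\<lambda>_. {..<M}). \<exists>a<M. \<exists>b<M. \<exists>q1<N. \<exists>q2<N.
           a \<noteq> b \<and> 2 * s / real N \<le> cmod (gram M N C q1 q2 a b)} = (\<Union>t\<in>T. Bad t)"
    by (auto simp: T_def Bad_def)
  moreover have "real (card (Bad t)) \<le> R" if "t \<in> T" for t
  proof -
    obtain a b q1 q2 where t: "t = (a, b, q1, q2)" "a < M" "b < M"
      using \<open>t \<in> T\<close> by (auto simp: T_def)
    show ?thesis
    proof (cases "a = b")
      case True
      then show ?thesis by (simp add: t Bad_def R_def)
    next
      case False
      then show ?thesis
        using card_gram_entry_ge_le[OF assms t(2,3) False, of q1 q2]
        by (simp add: t Bad_def R_def)
    qed
  qed
  then have "(\<Sum>t\<in>T. real (card (Bad t))) \<le> real (card T) * R"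
    using sum_mono[of T "\<lambda>t. real (card (Bad t))" "\<lambda>_. R"] by simp
  moreover have "real (card (\<Union>t\<in>T. Bad t)) \<le> (\<Sum>t\<in>T. real (card (Bad t)))"
    using card_UN_le[of T Bad] by (simp add: T_def flip: of_nat_sum)
  ultimately show ?thesis
    by (simp add: T_def R_def card_cartesian_product power2_eq_square mult_ac)
qed

lemma unif_prob_mu_I_mu_B_le:
  assumes "0 < M" "2 \<le> N" "0 \<le> s"
  shows "1 - 4 * real M ^ 2 * real N ^ 2 * exp (- (s\<^sup>2) / (2 * real N))
           \<le> unif_prob M N (\<lambda>C. mu_I M N C \<le> 2 * real M * s / real N
                                  \<and> mu_B M N C \<le> 2 * real M * s / real N)"
proof -
  define B where "B = {C \<in> PiE {..<N} (\<lambda>_. {..<M}). \<exists>a<M. \<exists>b<M. \<exists>q1<N. \<exists>q2<N.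
                           a \<noteq> b \<and> 2 * s / real N \<le> cmod (gram M N C q1 q2 a b)}"
  have "0 < N" using assms(2) by simp
  have "mu_I M N C \<le> real M * (2 * s / real N) \<and> mu_B M N C \<le> real M * (2 * s / real N)"
    if "C \<in> PiE {..<N} (\<lambda>_. {..<M})" "C \<notin> B" for C
  proof -
    have "cmod (gram M N C q1 q2 a c) \<le> 2 * s / real N"
      if "q1 < N" "q2 < N" "a < M" "c < M" "a \<noteq> c" for q1 q2 a c
      using \<open>C \<in> PiE {..<N} (\<lambda>_. {..<M})\<close> \<open>C \<notin> B\<close> that unfolding B_def by force
    then show ?thesis
      using assms \<open>0 < N\<close> by (intro conjI mu_I_le_of_offdiag_le mu_B_le_of_offdiag_le) auto
  qed
  then have "1 - real (card B) / real M ^ N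
               \<le> unif_prob M N (\<lambda>C. mu_I M N C \<le> 2 * real M * s / real N
                                      \<and> mu_B M N C \<le> 2 * real M * s / real N)"
    using assms(1) by (intro unif_prob_ge_1_minus_card) (auto simp: B_def finite_PiE mult_ac)
  moreover have "real (card B) / real M ^ N \<le> 4 * real M ^ 2 * real N ^ 2 * exp (- (s\<^sup>2) / (2 * real N))"
    using card_gram_offdiag_ge_le[OF \<open>0 < N\<close> assms(3), of M] assms(1)
    by (simp add: B_def pos_divide_le_eq mult.commute)
  ultimately show ?thesis by linarith
qed

section \<open>The sparsity condition for large \<open>N\<close>\<close>

lemma mult_div_le_of_sparsity_bound:
  fixes K M L N d1 d2 :: real
  assumes "0 < M" "0 < L" "0 < N" "\<bar>d1\<bar> \<le> 1/10000" "\<bar>d2\<bar> \<le> 1/10000"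
    and K: "K \<le> N * (1/8 - d1 - d2)\<^sup>2 / (81 * M * L * (1 + 2 * d2 / 3))"
  shows "K * M * L / N \<le> 1/5100"
proof -
  define D where "D = 81 * M * L * (1 + 2 * d2 / 3)"
  have D: "81 * M * L * (9999/10000) \<le> D"
    using assms(1,2,5) unfolding D_def by (intro mult_left_mono) auto
  have "\<bar>1/8 - d1 - d2\<bar> \<le> 1252/10000" using assms(4,5) by linarith
  from power_mono[OF this abs_ge_zero, of 2]
  have X: "(1/8 - d1 - d2)\<^sup>2 \<le> (1252/10000)\<^sup>2" by simp
  have "K * (81 * M * L * (9999/10000)) \<le> N * (1252/10000)\<^sup>2"
  proof (cases "0 \<le> K")
    case True
    have "0 < 81 * M * L * (9999/10000)" using assms(1,2) by simp
    with D have "0 < D" by linarith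
    then have "K * D \<le> N * (1/8 - d1 - d2)\<^sup>2"
      using K by (simp add: D_def[symmetric] pos_le_divide_eq)
    moreover have "K * (81 * M * L * (9999/10000)) \<le> K * D"
      using D True by (rule mult_left_mono)
    moreover have "N * (1/8 - d1 - d2)\<^sup>2 \<le> N * (1252/10000)\<^sup>2"
      using X assms(3) by simp
    ultimately show ?thesis by linarith
  next
    case False
    have "K * (81 * M * L * (9999/10000)) \<le> 0"
      using False assms(1,2) by (intro mult_nonpos_nonneg) auto
    also have "0 \<le> N * (1252/10000)\<^sup>2" using assms(3) by simp
    finally show ?thesis .
  qed
  then have "(K * M * L) * (81 * (9999/10000)) \<le> N * (1252/10000)\<^sup>2"
    by (simp add: mult_ac)
  then have "K * M * L \<le> 1/5100 * N"
    using assms(3) by (simp add: power2_eq_square mult_ac; linarith)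
  then show ?thesis
    using assms(3) by (simp add: pos_divide_le_eq)
qed

lemma coherence_expression_le_quarter:
  fixes K L N M mI mB S e :: real
  assumes "0 < N" "1 \<le> L" "0 \<le> K" "K * M * L / N \<le> 1/5100"
    and "mI \<le> e" "mB \<le> e" "0 \<le> e" "e * L \<le> 1/10000" "0 \<le> S" "S \<le> sqrt M"
  shows "17 * sqrt (K * L * (1 + mI) / N) * S + 48 * mB * L + 2 * K / N * S\<^sup>2 + 3 * mI \<le> 1/4"
proof -
  have "e \<le> 1/10000"
    using assms(2,7,8) mult_left_mono[of 1 L e] by simp
  have "0 \<le> K * L / N" using assms(1-3) by simp
  have "sqrt (K * L * (1 + mI) / N) * S \<le> sqrt (K * L * (1 + e) / N) * sqrt M"
  proof (rule mult_mono)
    show "sqrt (K * L * (1 + mI) / N) \<le> sqrt (K * L * (1 + e) / N)"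
      using mult_left_mono[OF _ \<open>0 \<le> K * L / N\<close>, of "1 + mI" "1 + e"] assms(5) by simp
  qed (use assms(1-3,7,9,10) in auto)
  also have "\<dots> = sqrt (K * M * L / N * (1 + e))"
    by (simp add: real_sqrt_mult[symmetric] field_simps)
  also have "\<dots> \<le> sqrt ((141/10000)\<^sup>2)"
    using mult_mono[OF assms(4), of "1 + e" "10001/10000"] \<open>e \<le> 1/10000\<close> assms(7)
    by (intro real_sqrt_le_mono) (simp add: power2_eq_square)
  finally have T1: "sqrt (K * L * (1 + mI) / N) * S \<le> 141/10000" by simp
  have "mB * L \<le> e * L"
    using assms(2,6) by (intro mult_right_mono) auto
  with assms(8) have T2: "mB * L \<le> 1/10000" by linarith
  have "0 \<le> sqrt M" using assms(9,10) by linarith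
  then have "S\<^sup>2 \<le> M"
    using power_mono[OF assms(10,9), of 2] by simp
  then have "2 * K / N * S\<^sup>2 \<le> 2 * K / N * M"
    using assms(1,3) by (intro mult_left_mono) auto
  also have "\<dots> = 2 * (K * M * L / N) / L"
    using assms(2) by (simp add: field_simps)
  also have "\<dots> \<le> 2 * (1/5100) / 1"
    using assms(2,4) by (intro frac_le) (auto simp: mult_ac)
  finally have T3: "2 * K / N * S\<^sup>2 \<le> 2/5100" by simp
  show ?thesis using T1 T2 T3 assms(5) \<open>e \<le> 1/10000\<close> by linarith
qed

lemma eventually_coherence_conditions:
  fixes M c1 c2 \<epsilon> :: real
  assumes "1 < M" "0 < \<epsilon>"
  shows "\<forall>\<^sub>F N in sequentially.
     4 * M\<^sup>2 * (real N)\<^sup>2 * exp (- ((real N powr (2/3))\<^sup>2) / (2 * real N)) \<le> \<epsilon> \<and>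
     \<bar>24 * sqrt ((M - 1) / real N) * ln (M * real N) * (2 * sqrt (ln (M * real N) - c1) + 1)\<bar> \<le> 1/10000 \<and>
     \<bar>3 / 2 * sqrt ((M - 1) / real N) * (2 * sqrt c2 + 1)\<bar> \<le> 1/10000 \<and>
     2 * M * real N powr (2/3) / real N * ln (M * real N) \<le> 1/10000 \<and>
     1 \<le> ln (M * real N) \<and> 2 \<le> N"
proof -
  have lim:
    "((\<lambda>x. 4 * M\<^sup>2 * x\<^sup>2 * exp (- ((x powr (2/3))\<^sup>2) / (2 * x))) \<longlongrightarrow> 0) at_top"
    "((\<lambda>x. 24 * sqrt ((M - 1) / x) * ln (M * x) * (2 * sqrt (ln (M * x) - c1) + 1)) \<longlongrightarrow> 0) at_top"
    "((\<lambda>x. 3 / 2 * sqrt ((M - 1) / x) * (2 * sqrt c2 + 1)) \<longlongrightarrow> 0) at_top"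
    "((\<lambda>x. 2 * M * x powr (2/3) / x * ln (M * x)) \<longlongrightarrow> 0) at_top"
    "filterlim (\<lambda>x. ln (M * x)) at_top at_top"
    using assms(1) by real_asymp+
  have "(0::real) < 1/10000" by simp
  note small = tendstoD[OF lim(1) assms(2)] tendstoD[OF lim(2) this] tendstoD[OF lim(3) this]
    tendstoD[OF lim(4) this]
  have "\<forall>\<^sub>F x in at_top. 1 \<le> ln (M * x)"
    using lim(5) by (simp add: filterlim_at_top)
  with small have "\<forall>\<^sub>F x in at_top.
     4 * M\<^sup>2 * x\<^sup>2 * exp (- ((x powr (2/3))\<^sup>2) / (2 * x)) \<le> \<epsilon> \<and>
     \<bar>24 * sqrt ((M - 1) / x) * ln (M * x) * (2 * sqrt (ln (M * x) - c1) + 1)\<bar> \<le> 1/10000 \<and>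
     \<bar>3 / 2 * sqrt ((M - 1) / x) * (2 * sqrt c2 + 1)\<bar> \<le> 1/10000 \<and>
     2 * M * x powr (2/3) / x * ln (M * x) \<le> 1/10000 \<and>
     1 \<le> ln (M * x)"
    by eventually_elim (simp only: dist_real_def diff_zero abs_less_iff abs_le_iff, safe; linarith)
  then have "\<forall>\<^sub>F N in sequentially.
     4 * M\<^sup>2 * (real N)\<^sup>2 * exp (- ((real N powr (2/3))\<^sup>2) / (2 * real N)) \<le> \<epsilon> \<and>
     \<bar>24 * sqrt ((M - 1) / real N) * ln (M * real N) * (2 * sqrt (ln (M * real N) - c1) + 1)\<bar> \<le> 1/10000 \<and>
     \<bar>3 / 2 * sqrt ((M - 1) / real N) * (2 * sqrt c2 + 1)\<bar> \<le> 1/10000 \<and>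
     2 * M * real N powr (2/3) / real N * ln (M * real N) \<le> 1/10000 \<and>
     1 \<le> ln (M * real N)"
    using filterlim_real_sequentially unfolding filterlim_iff by blast
  with eventually_ge_at_top[of 2] show ?thesis
    by eventually_elim blast
qed

lemma unif_prob_coherence_expression_ge:
  assumes "2 \<le> M" "2 \<le> N" "1 \<le> L" "\<bar>d1\<bar> \<le> 1/10000" "\<bar>d2\<bar> \<le> 1/10000"
    and "4 * (real M)\<^sup>2 * (real N)\<^sup>2 * exp (- ((real N powr (2/3))\<^sup>2) / (2 * real N)) \<le> \<epsilon>"
    and "2 * real M * real N powr (2/3) / real N * L \<le> 1/10000"
    and "real K \<le> real N * (1/8 - d1 - d2)\<^sup>2 / (81 * real M * L * (1 + 2 * d2 / 3))"
  shows "1 - \<epsilon> \<le> unif_prob M N (\<lambda>C.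
            17 * sqrt (real K * L * (1 + mu_I M N C) / real N) * spec_norm N (M * N) (Psi M N C)
            + 48 * mu_B M N C * L
            + 2 * real K / real N * (spec_norm N (M * N) (Psi M N C))\<^sup>2
            + 3 * mu_I M N C \<le> 1/4)"
    (is "_ \<le> unif_prob M N ?event")
proof -
  define e where "e = 2 * real M * real N powr (2/3) / real N"
  have sparse: "real K * real M * L / real N \<le> 1/5100"
    using assms by (intro mult_div_le_of_sparsity_bound) auto
  have "1 - \<epsilon> \<le> 1 - 4 * real M ^ 2 * real N ^ 2 * exp (- ((real N powr (2/3))\<^sup>2) / (2 * real N))"
    using assms(6) by simp
  also have "\<dots> \<le> unif_prob M N (\<lambda>C. mu_I M N C \<le> e \<and> mu_B M N C \<le> e)"
    using unif_prob_mu_I_mu_B_le[of M N "real N powr (2/3)"] assms(1,2) by (simp add: e_def)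
  also have "\<dots> \<le> unif_prob M N ?event"
  proof (rule unif_prob_mono)
    fix C assume "mu_I M N C \<le> e \<and> mu_B M N C \<le> e"
    moreover have "0 \<le> spec_norm N (M * N) (Psi M N C)" "spec_norm N (M * N) (Psi M N C) \<le> sqrt (real M)"
      using assms(1,2) by (simp_all add: spec_norm_nonneg spec_norm_Psi_le)
    ultimately show "?event C"
      using assms(2,3,7) sparse by (intro coherence_expression_le_quarter[where e = e]) (auto simp: e_def)
  qed
  finally show ?thesis .
qed

theorem theorem3:
  fixes M :: nat
  assumes "M \<ge> 2"
  shows "\<forall>\<epsilon>::real. \<epsilon> > 0 \<longrightarrow> (\<exists>N0. \<forall>N\<ge>N0. N > 0 \<longrightarrow> (\<forall>K::nat. K > 0 \<longrightarrow>
     (let L = ln (real M * real N);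
          d1 = 24 * sqrt ((real M - 1) / real N) * L * (2 * sqrt (L - ln \<epsilon>) + 1);
          d2 = 3 / 2 * sqrt ((real M - 1) / real N) * (2 * sqrt (ln (2 * real M) - ln \<epsilon>) + 1)
      in real K \<le> real N * (1/8 - d1 - d2)\<^sup>2 / (81 * real M * L * (1 + 2 * d2 / 3)) \<longrightarrow>
         unif_prob M N (\<lambda>C.
            17 * sqrt (real K * L * (1 + mu_I M N C) / real N) * spec_norm N (M * N) (Psi M N C)
            + 48 * mu_B M N C * L
            + 2 * real K / real N * (spec_norm N (M * N) (Psi M N C))\<^sup>2
            + 3 * mu_I M N C \<le> 1/4) \<ge> 1 - \<epsilon>)))"
  apply (intro allI impI)
  subgoal premises \<epsilon>_pos for \<epsilon>
  proof -
    have "1 < real M" using assms by simp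
    from eventually_coherence_conditions[OF this \<epsilon>_pos, of "ln \<epsilon>" "ln (2 * real M) - ln \<epsilon>"]
    show ?thesis
      using assms unfolding eventually_sequentially Let_def
      by (blast intro: unif_prob_coherence_expression_ge)
  qed
  done

end
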